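(* Let $X$ and $X'$ be $3$-dimensional locally standard $T^1$-pseudomanifolds over $2$-stratifolds (i.e. $(l,m,n)=(1,1,1)$), with characteristic data $(Q,\{1,T\},0)$ and $(Q',\{1,T\},0)$. Then these data are (weakly) isomorphic — equivalently, there exists a stratified homeomorphism $Q\to Q'$ — if and only if $X$ and $X'$ are (weakly) $T^1$-equivariantly homeomorphic.
   Context: Notation: $U(1)=\{z\in\mathbb C:|z|=1\}$, $T^m=U(1)^m$, $\mathbb C^\times=\mathbb C\setminus\{0\}$, open cone $\mathring c(L)=L\times[0,1)/(L\times\{0\})$ ($\mathring c(\emptyset)$ a point). A topological stratified pseudomanifold is a Hausdorff space $Q$ with closed filtration $Q=Q_{l+n}\supsetneq\cdots\supsetneq Q_l\supsetneq\emptyset$ whose strata (components of $Q_i\setminus Q_{i-1}$) are $i$-manifolds, with $\mathring Q=Q_{l+n}\setminus Q_{l+n-1}$ dense, and each point $p$ of an $(l+i)$-stratum having a filtration-preserving neighborhood $O\times\mathring c(L_p)$, $O\subset\mathbb R^{l+i}$ contractible open, $L_p$ a compact $(n-i-1)$-dimensional topological stratified pseudomanifold (the link). Locally standard $T^m$-pseudomanifold $X$ (dimension $l+m+n$, $l\ge0$, $m\ge n\ge0$): a second-countable compact Hausdorff space with effective continuous $T^m$-action with subtorus isotropy groups, filtered by $X_{l+2i+(m-n)}=X_{l+2i+1+(m-n)}=\{x:\dim T^mx\le i+m-n\}$ ($0\le i\le n$), which is a topological stratified pseudomanifold with no orbits of dimension $<m-n$ and with free orbits if $l+n\ne0$, and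 inductively: if $l+n=0$, $X$ is a finite disjoint union of copies of $T^m$; otherwise each $x\in X_{l+2i+(m-n)}\setminus X_{l+2(i-1)+(m-n)}$ has an invariant open neighborhood weakly equivariantly homeomorphic to $O\times(\Omega\times U(1)^{m-n})\times\mathring c(L_x)$ with $O\subset\mathbb R^l$ contractible open, $\Omega\subset(\mathbb C^\times)^i$ invariant open, $L_x$ a compact $(2n-2i-1)$-dimensional locally standard $T_x$-pseudomanifold ($T_x\cong T^{n-i}$ the isotropy group), $T^m\cong U(1)^{i+m-n}\times T_x$ acting freely on the middle factor and via $L_x$ on the cone. The orbit space $Q=X/T^m$ with filtration $Q_{l+i}=X_{l+2i+(m-n)}/T^m$ is a topological stratified pseudomanifold of dimension $l+n$. When $(l,n)=(1,1)$, $Q$ (filtration $Q_2\supset Q_1\supset\emptyset$) is called a $2$-stratifold; for $m=1$ the characteristic functor $\{1,T\}$ assigns the trivial group to $2$-strata and $T^1$ to $1$-strata, and the Chern class of the free part is $0$. A stratified homeomorphism is a homeomorphism carrying strata onto strata and preserving the filtration; a weak isomorphism of data additionally allows an automorphism of $T^1$ (here only $t\mapsto t^{\pm1}$), an isomorphism requires the identity. A weak equivariant homeomorphism is a homeomorphism $F$ with $F(tx)=\psi(t)F(x)$ for some automorphism $\psi$. *)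

theory Defs
  imports "HOL-Analysis.Analysis"
begin

abbreviation U1 :: "complex set" where "U1 \<equiv> sphere 0 1"

definition torus_aut :: "(complex \<Rightarrow> complex) \<Rightarrow> bool" where
  "torus_aut \<psi> \<longleftrightarrow> continuous_on U1 \<psi> \<and> bij_betw \<psi> U1 U1 \<and>
     (\<forall>s\<in>U1. \<forall>t\<in>U1. \<psi> (s * t) = \<psi> s * \<psi> t)"

definition U1_action :: "'a topology \<Rightarrow> (complex \<Rightarrow> 'a \<Rightarrow> 'a) \<Rightarrow> bool" where
  "U1_action X act \<longleftrightarrow>
     continuous_map (prod_topology (top_of_set U1) X) X (\<lambda>(t, x). act t x) \<and>
     (\<forall>x\<in>topspace X. act 1 x = x) \<and>
     (\<forall>s\<in>U1. \<forall>t\<in>U1. \<forall>x\<in>topspace X. act (s * t) x = act s (act t x))"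

definition stabilizer :: "(complex \<Rightarrow> 'a \<Rightarrow> 'a) \<Rightarrow> 'a \<Rightarrow> complex set" where
  "stabilizer act x = {t \<in> U1. act t x = x}"

definition orbit :: "(complex \<Rightarrow> 'a \<Rightarrow> 'a) \<Rightarrow> 'a \<Rightarrow> 'a set" where
  "orbit act x = (\<lambda>t. act t x) ` U1"

definition invariant_set :: "(complex \<Rightarrow> 'a \<Rightarrow> 'a) \<Rightarrow> 'a set \<Rightarrow> bool" where
  "invariant_set act W \<longleftrightarrow> (\<forall>t\<in>U1. \<forall>x\<in>W. act t x \<in> W)"

definition weak_equiv_homeo ::
  "'a topology \<Rightarrow> (complex \<Rightarrow> 'a \<Rightarrow> 'a) \<Rightarrow> 'b topology \<Rightarrow> (complex \<Rightarrow> 'b \<Rightarrow> 'b) \<Rightarrow> ('a \<Rightarrow> 'b) \<Rightarrow> bool"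
  where
  "weak_equiv_homeo X act Y act' F \<longleftrightarrow> homeomorphic_map X Y F \<and>
     (\<exists>\<psi>. torus_aut \<psi> \<and> (\<forall>t\<in>U1. \<forall>x\<in>topspace X. F (act t x) = act' (\<psi> t) (F x)))"

definition equiv_homeo ::
  "'a topology \<Rightarrow> (complex \<Rightarrow> 'a \<Rightarrow> 'a) \<Rightarrow> 'b topology \<Rightarrow> (complex \<Rightarrow> 'b \<Rightarrow> 'b) \<Rightarrow> ('a \<Rightarrow> 'b) \<Rightarrow> bool"
  where
  "equiv_homeo X act Y act' F \<longleftrightarrow> homeomorphic_map X Y F \<and>
     (\<forall>t\<in>U1. \<forall>x\<in>topspace X. F (act t x) = act' t (F x))"

text \<open>Quotient topology of X with respect to a partition P of its carrier; the points of
  the quotient are the blocks of the partition.\<close>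
definition quot_top :: "'a topology \<Rightarrow> 'a set set \<Rightarrow> 'a set topology" where
  "quot_top X P = topology (\<lambda>U. U \<subseteq> P \<and> openin X (\<Union>U))"

text \<open>Open cone L \<times> [0,1) / L \<times> {0}.  (For empty L this is a single point, the block {}.)\<close>
definition cone_blocks :: "'a set \<Rightarrow> ('a \<times> real) set set" where
  "cone_blocks S = {{(x, s)} | x s. x \<in> S \<and> 0 < s \<and> s < 1} \<union> {S \<times> {0}}"

definition open_cone :: "'a topology \<Rightarrow> ('a \<times> real) set topology" where
  "open_cone L = quot_top (prod_topology L (top_of_set {0..<1})) (cone_blocks (topspace L))"

definition cone_act :: "(complex \<Rightarrow> 'a \<Rightarrow> 'a) \<Rightarrow> complex \<Rightarrow> ('a \<times> real) set \<Rightarrow> ('a \<times> real) set" where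
  "cone_act act t C = (\<lambda>(x, s). (act t x, s)) ` C"

text \<open>The orbit space X/U(1) and its filtration: Q_1 = orbits of fixed points, Q_2 = Q.\<close>
definition orbits :: "'a topology \<Rightarrow> (complex \<Rightarrow> 'a \<Rightarrow> 'a) \<Rightarrow> 'a set set" where
  "orbits X act = {orbit act x | x. x \<in> topspace X}"

definition orbit_space :: "'a topology \<Rightarrow> (complex \<Rightarrow> 'a \<Rightarrow> 'a) \<Rightarrow> 'a set topology" where
  "orbit_space X act = quot_top X (orbits X act)"

definition fixed_points :: "'a topology \<Rightarrow> (complex \<Rightarrow> 'a \<Rightarrow> 'a) \<Rightarrow> 'a set" where
  "fixed_points X act = {x \<in> topspace X. stabilizer act x = U1}"

definition free_points :: "'a topology \<Rightarrow> (complex \<Rightarrow> 'a \<Rightarrow> 'a) \<Rightarrow> 'a set" where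
  "free_points X act = {x \<in> topspace X. stabilizer act x = {1}}"

definition orbit_filtration :: "'a topology \<Rightarrow> (complex \<Rightarrow> 'a \<Rightarrow> 'a) \<Rightarrow> nat \<Rightarrow> 'a set set" where
  "orbit_filtration X act i =
     (if i = 0 then {} else if i = 1 then orbit act ` fixed_points X act else orbits X act)"

text \<open>Stratified homeomorphism: homeomorphism carrying each filtration set onto the
  corresponding one (hence strata, i.e. components of Q_i - Q_(i-1), onto strata).\<close>
definition stratified_homeo ::
  "'a topology \<Rightarrow> (nat \<Rightarrow> 'a set) \<Rightarrow> 'b topology \<Rightarrow> (nat \<Rightarrow> 'b set) \<Rightarrow> ('a \<Rightarrow> 'b) \<Rightarrow> bool" where
  "stratified_homeo Q F Q' F' f \<longleftrightarrow> homeomorphic_map Q Q' f \<and> (\<forall>i. f ` F i = F' i)"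

text \<open>Link at a fixed point: compact 1-dimensional locally standard T^1-pseudomanifold,
  i.e. a finite (nonempty) disjoint union of k copies of T^1 = U(1) with the translation action.\<close>
definition circles :: "nat \<Rightarrow> (nat \<times> complex) topology" where
  "circles k = top_of_set ({..<k} \<times> U1)"

definition circles_act :: "complex \<Rightarrow> nat \<times> complex \<Rightarrow> nat \<times> complex" where
  "circles_act t = (\<lambda>(j, z). (j, t * z))"

text \<open>Model at a fixed point (i = 0): Op \<times> c(L_x), Op \<subseteq> R contractible open
  (the factor \<Omega> \<times> U(1)^(m-n) \<subseteq> (C^*)^0 is a point and is omitted).\<close>
definition fixed_model :: "real set \<Rightarrow> nat \<Rightarrow> (real \<times> ((nat \<times> complex) \<times> real) set) topology" where
  "fixed_model Op k = prod_topology (top_of_set Op) (open_cone (circles k))"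

definition fixed_model_act ::
  "complex \<Rightarrow> real \<times> ((nat \<times> complex) \<times> real) set \<Rightarrow> real \<times> ((nat \<times> complex) \<times> real) set" where
  "fixed_model_act t = (\<lambda>(r, C). (r, cone_act circles_act t C))"

text \<open>Model at a free point (i = 1): Op \<times> \<Omega> with \<Omega> \<subseteq> C^* invariant open, U(1) acting
  by multiplication (the cone on the empty link is a point and is omitted).\<close>
definition free_model :: "real set \<Rightarrow> complex set \<Rightarrow> (real \<times> complex) topology" where
  "free_model Op \<Omega> = top_of_set (Op \<times> \<Omega>)"

definition free_model_act :: "complex \<Rightarrow> real \<times> complex \<Rightarrow> real \<times> complex" where
  "free_model_act t = (\<lambda>(r, z). (r, t * z))"

definition locally_standard_T1_over_2stratifold :: "'a topology \<Rightarrow> (complex \<Rightarrow> 'a \<Rightarrow> 'a) \<Rightarrow> bool" where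
  "locally_standard_T1_over_2stratifold X act \<longleftrightarrow>
     second_countable X \<and> compact_space X \<and> Hausdorff_space X \<and>
     U1_action X act \<and>
     \<comment> \<open>effective\<close>
     (\<forall>t\<in>U1. (\<forall>x\<in>topspace X. act t x = x) \<longrightarrow> t = 1) \<and>
     \<comment> \<open>isotropy groups are subtori of T^1, i.e. trivial or all of T^1\<close>
     (\<forall>x\<in>topspace X. stabilizer act x = {1} \<or> stabilizer act x = U1) \<and>
     \<comment> \<open>strict filtration Q_2 \<supset> Q_1 \<supset> {} : free orbits and fixed points exist\<close>
     free_points X act \<noteq> {} \<and> fixed_points X act \<noteq> {} \<and>
     \<comment> \<open>local model at fixed points\<close>
     (\<forall>x\<in>fixed_points X act. \<exists>W Op k F.
         openin X W \<and> x \<in> W \<and> invariant_set act W \<and>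
         open Op \<and> contractible Op \<and> k \<ge> 1 \<and>
         weak_equiv_homeo (subtopology X W) act (fixed_model Op k) fixed_model_act F) \<and>
     \<comment> \<open>local model at free points\<close>
     (\<forall>x\<in>free_points X act. \<exists>W Op \<Omega> F.
         openin X W \<and> x \<in> W \<and> invariant_set act W \<and>
         open Op \<and> contractible Op \<and>
         open \<Omega> \<and> 0 \<notin> \<Omega> \<and> (\<forall>t\<in>U1. \<forall>z\<in>\<Omega>. t * z \<in> \<Omega>) \<and>
         weak_equiv_homeo (subtopology X W) act (free_model Op \<Omega>) free_model_act F)"

text \<open>Chern class of the free part equal to 0: the principal U(1)-bundle
  X_free \<rightarrow> Q_free = X_free / U(1) is trivial, i.e. admits a continuous section.\<close>
definition chern_class_zero :: "'a topology \<Rightarrow> (complex \<Rightarrow> 'a \<Rightarrow> 'a) \<Rightarrow> bool" where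
  "chern_class_zero X act \<longleftrightarrow>
     (\<exists>s. continuous_map (subtopology (orbit_space X act) (orbit act ` free_points X act))
                          (subtopology X (free_points X act)) s \<and>
          (\<forall>C\<in>orbit act ` free_points X act. s C \<in> C))"

end

(*
  Over the free part the vanishing Chern class gives continuous sections s and s'
  of the orbit maps, so every free point is uniquely t * s(C) with t in U(1) depending
  continuously on the point (a closed-graph argument, U(1) being compact).  A stratified
  homeomorphism f of the orbit spaces therefore lifts to t * s(C) |-> t * s'(f C) on free
  points, and to the unique point of f {x} at a fixed point x.  The lift is continuous at fixed
  points because, again by compactness of U(1), the orbits contained in an open set form an
  open set of the orbit space.  Lifting the inverse of f gives the inverse map.  Conversely a
  weakly equivariant homeomorphism maps orbits onto orbits and fixed points onto fixed points,
  so it induces a stratified homeomorphism of the orbit spaces.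
*)

theory Submission
  imports Defs
begin

lemma openin_quot_top:
  assumes "pairwise disjnt P"
  shows "openin (quot_top X P) U \<longleftrightarrow> U \<subseteq> P \<and> openin X (\<Union>U)"
proof -
  have "istopology (\<lambda>U. U \<subseteq> P \<and> openin X (\<Union>U))"
    unfolding istopology_def
  proof (rule conjI; intro allI impI)
    fix S T assume S: "S \<subseteq> P \<and> openin X (\<Union>S)" and T: "T \<subseteq> P \<and> openin X (\<Union>T)"
    have "\<Union>(S \<inter> T) = \<Union>S \<inter> \<Union>T"
    proof (intro equalityI subsetI)
      fix x assume "x \<in> \<Union>S \<inter> \<Union>T"
      then obtain A B where "A \<in> S" "B \<in> T" "x \<in> A" "x \<in> B" by blast
      moreover from this have "A = B"
        using S T assms unfolding pairwise_def disjnt_iff by blast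
      ultimately show "x \<in> \<Union>(S \<inter> T)" by blast
    qed blast
    then show "S \<inter> T \<subseteq> P \<and> openin X (\<Union>(S \<inter> T))"
      using S T by auto
  next
    fix K :: "'a set set set" assume K: "\<forall>S\<in>K. S \<subseteq> P \<and> openin X (\<Union>S)"
    have "openin X (\<Union>(Union ` K))"
      using K by (intro openin_Union) auto
    moreover have "\<Union>(\<Union>K) = \<Union>(Union ` K)" by blast
    ultimately show "\<Union>K \<subseteq> P \<and> openin X (\<Union>(\<Union>K))"
      using K by auto
  qed
  then show ?thesis
    unfolding quot_top_def by simp
qed

lemma topspace_quot_top:
  assumes "pairwise disjnt P" and "\<Union>P = topspace X"
  shows "topspace (quot_top X P) = P"
proof
  show "topspace (quot_top X P) \<subseteq> P"
    unfolding topspace_def using openin_quot_top[OF assms(1)] by blast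
  show "P \<subseteq> topspace (quot_top X P)"
    by (rule openin_subset) (simp add: openin_quot_top assms)
qed

lemma continuous_map_closed_graph_compact:
  assumes "compact_space Y" and g: "g \<in> topspace X \<rightarrow> topspace Y"
    and graph: "closedin (prod_topology X Y) {z \<in> topspace X \<times> topspace Y. snd z = g (fst z)}"
  shows "continuous_map X Y g"
proof -
  have "closedin X {x \<in> topspace X. g x \<in> C}" if C: "closedin Y C" for C
  proof -
    let ?G = "{z \<in> topspace X \<times> topspace Y. snd z = g (fst z)} \<inter> topspace X \<times> C"
    have "closedin (prod_topology X Y) ?G"
      using graph C by (simp add: closedin_Int closedin_prod_Times_iff)
    then have "closedin X (fst ` ?G)"
      using closed_map_fst[OF assms(1)] unfolding closed_map_def by blast
    moreover have "fst ` ?G = {x \<in> topspace X. g x \<in> C}"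
      using g closedin_subset[OF C] by force
    ultimately show ?thesis by simp
  qed
  then show ?thesis
    using g by (simp add: continuous_map_closedin)
qed

lemma topcontinuous_at_if_continuous_on_open:
  assumes "openin X W" and "x \<in> W" and "g \<in> topspace X \<rightarrow> topspace Y"
    and "continuous_map (subtopology X W) Y g"
  shows "topcontinuous_at X Y g x"
  unfolding topcontinuous_at_def
proof (intro conjI allI impI)
  show "x \<in> topspace X" "g \<in> topspace X \<rightarrow> topspace Y"
    using assms openin_subset by blast+
  fix V assume V: "openin Y V \<and> g x \<in> V"
  let ?S = "{y \<in> topspace (subtopology X W). g y \<in> V}"
  have "openin X ?S"
    using openin_continuous_map_preimage[OF assms(4)] V openin_trans_full[OF _ assms(1)] by blast
  moreover have "x \<in> ?S"
    using assms(1,2) V openin_subset by (auto simp: topspace_subtopology)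
  ultimately show "\<exists>U. openin X U \<and> x \<in> U \<and> (\<forall>y\<in>U. g y \<in> V)"
    by blast
qed

lemma homeomorphic_maps_image_image:
  assumes "homeomorphic_maps X Y f g" and "S \<subseteq> topspace X"
  shows "g ` f ` S = S"
proof -
  have "(\<lambda>x. g (f x)) ` S = (\<lambda>x. x) ` S"
    using assms unfolding homeomorphic_maps_def by (intro image_cong) auto
  then show ?thesis
    by (simp add: image_image)
qed

lemma stratified_homeo_inverse:
  assumes f: "stratified_homeo Q F Q' F' f" and F: "\<And>i. F i \<subseteq> topspace Q"
  obtains g where "homeomorphic_maps Q Q' f g" and "stratified_homeo Q' F' Q F g"
proof -
  have "homeomorphic_map Q Q' f"
    using f unfolding stratified_homeo_def by blast
  then obtain g where g: "homeomorphic_maps Q Q' f g"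
    by (auto simp: homeomorphic_map_maps)
  have "g ` F' i = F i" for i
    using f homeomorphic_maps_image_image[OF g F] unfolding stratified_homeo_def by simp
  moreover have "homeomorphic_map Q' Q g"
    using g homeomorphic_maps_map by blast
  ultimately show thesis
    using that g unfolding stratified_homeo_def by blast
qed

section \<open>Continuous circle actions\<close>

lemma U1_cnj_mult: "t \<in> U1 \<Longrightarrow> cnj t * t = 1"
  by (simp add: complex_norm_square[symmetric] mult.commute)

lemma U1_mult: "s \<in> U1 \<Longrightarrow> t \<in> U1 \<Longrightarrow> s * t \<in> U1"
  by (simp add: norm_mult)

lemma compact_space_U1: "compact_space (top_of_set U1)"
  by (simp add: compact_space_subtopology)

locale circle_action =
  fixes X :: "'a topology" and act :: "complex \<Rightarrow> 'a \<Rightarrow> 'a"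
  assumes action: "U1_action X act"
begin

lemma continuous_map_action:
  "continuous_map (prod_topology (top_of_set U1) X) X (\<lambda>(t, x). act t x)"
  using action unfolding U1_action_def by blast

lemma act_one [simp]: "x \<in> topspace X \<Longrightarrow> act 1 x = x"
  using action unfolding U1_action_def by blast

lemma act_act: "s \<in> U1 \<Longrightarrow> t \<in> U1 \<Longrightarrow> x \<in> topspace X \<Longrightarrow> act s (act t x) = act (s * t) x"
  using action unfolding U1_action_def by simp

lemma act_in_topspace: "t \<in> U1 \<Longrightarrow> x \<in> topspace X \<Longrightarrow> act t x \<in> topspace X"
  using continuous_map_image_subset_topspace[OF continuous_map_action] by force

lemma act_cnj_act: "t \<in> U1 \<Longrightarrow> x \<in> topspace X \<Longrightarrow> act (cnj t) (act t x) = x"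
  by (simp add: act_act U1_cnj_mult)

lemma act_commute:
  "s \<in> U1 \<Longrightarrow> t \<in> U1 \<Longrightarrow> x \<in> topspace X \<Longrightarrow> act s (act t x) = act t (act s x)"
  by (simp add: act_act mult.commute)

lemma continuous_map_act_comp:
  assumes "continuous_map Z (top_of_set U1) a" and "continuous_map Z X b"
  shows "continuous_map Z X (\<lambda>z. act (a z) (b z))"
  using continuous_map_compose[OF continuous_map_pairedI[OF assms] continuous_map_action]
  by (simp add: o_def)

lemma continuous_map_act: "t \<in> U1 \<Longrightarrow> continuous_map X X (act t)"
  using continuous_map_act_comp[of X "\<lambda>_. t" "\<lambda>x. x"] by simp

lemma orbit_subset_topspace: "x \<in> topspace X \<Longrightarrow> orbit act x \<subseteq> topspace X"
  unfolding orbit_def using act_in_topspace by blast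

lemma mem_orbit_self: "x \<in> topspace X \<Longrightarrow> x \<in> orbit act x"
  unfolding orbit_def by (metis act_one image_eqI mem_sphere_0 norm_one)

lemma orbit_act: "t \<in> U1 \<Longrightarrow> x \<in> topspace X \<Longrightarrow> orbit act (act t x) = orbit act x"
proof (intro equalityI subsetI)
  fix y assume t: "t \<in> U1" and x: "x \<in> topspace X"
  { assume "y \<in> orbit act (act t x)"
    then obtain u where "u \<in> U1" "y = act (u * t) x"
      unfolding orbit_def using act_act t x by auto
    then show "y \<in> orbit act x"
      unfolding orbit_def using U1_mult t by blast }
  { assume "y \<in> orbit act x"
    then obtain u where u: "u \<in> U1" "y = act u x"
      unfolding orbit_def by auto
    then have "y = act (u * cnj t) (act t x)"
      using t x U1_mult[OF u(1), of "cnj t"] by (simp add: act_act mult.assoc U1_cnj_mult)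
    then show "y \<in> orbit act (act t x)"
      unfolding orbit_def using U1_mult[OF u(1), of "cnj t"] t by auto }
qed

lemma orbit_eq_if_mem:
  assumes "x \<in> topspace X" and "y \<in> orbit act x"
  shows "orbit act y = orbit act x"
proof -
  obtain t where "t \<in> U1" "y = act t x"
    using assms(2) unfolding orbit_def by blast
  then show ?thesis
    using orbit_act assms(1) by simp
qed

lemma mem_orbit_sym: "x \<in> topspace X \<Longrightarrow> y \<in> orbit act x \<Longrightarrow> x \<in> orbit act y"
  using orbit_eq_if_mem mem_orbit_self by blast

lemma orbit_in_orbits: "x \<in> topspace X \<Longrightarrow> orbit act x \<in> orbits X act"
  unfolding orbits_def by blast

lemma orbits_eq_orbit:
  assumes "C \<in> orbits X act" and "x \<in> C"
  shows "C = orbit act x"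
proof -
  obtain z where "z \<in> topspace X" "C = orbit act z"
    using assms(1) unfolding orbits_def by blast
  then show ?thesis
    using orbit_eq_if_mem assms(2) by simp
qed

lemma orbits_subset_topspace: "C \<in> orbits X act \<Longrightarrow> C \<subseteq> topspace X"
  unfolding orbits_def using orbit_subset_topspace by blast

lemma pairwise_disjnt_orbits: "pairwise disjnt (orbits X act)"
proof (rule pairwiseI)
  fix C D assume "C \<in> orbits X act" "D \<in> orbits X act" "C \<noteq> D"
  then show "disjnt C D"
    using orbits_eq_orbit unfolding disjnt_iff by metis
qed

lemma Union_orbits: "\<Union>(orbits X act) = topspace X"
proof (intro equalityI subsetI)
  fix x assume "x \<in> \<Union>(orbits X act)"
  then show "x \<in> topspace X"
    using orbits_subset_topspace by blast
next
  fix x assume "x \<in> topspace X"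
  then show "x \<in> \<Union>(orbits X act)"
    using mem_orbit_self orbit_in_orbits by blast
qed

lemma topspace_orbit_space: "topspace (orbit_space X act) = orbits X act"
  unfolding orbit_space_def by (rule topspace_quot_top[OF pairwise_disjnt_orbits Union_orbits])

lemma openin_orbit_space:
  "openin (orbit_space X act) U \<longleftrightarrow> U \<subseteq> orbits X act \<and> openin X (\<Union>U)"
  unfolding orbit_space_def by (rule openin_quot_top[OF pairwise_disjnt_orbits])

lemma continuous_map_orbit: "continuous_map X (orbit_space X act) (orbit act)"
  unfolding continuous_map_def
proof (intro conjI allI impI)
  show "orbit act \<in> topspace X \<rightarrow> topspace (orbit_space X act)"
    using orbit_in_orbits by (simp add: topspace_orbit_space)
  fix U assume "openin (orbit_space X act) U"
  then have U: "U \<subseteq> orbits X act" "openin X (\<Union>U)"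
    by (simp_all add: openin_orbit_space)
  then have "{x \<in> topspace X. orbit act x \<in> U} = \<Union>U"
    using orbits_eq_orbit mem_orbit_self orbits_subset_topspace by blast
  with U show "openin X {x \<in> topspace X. orbit act x \<in> U}" by simp
qed

lemma continuous_map_from_orbit_space:
  assumes g: "continuous_map X Y (g \<circ> orbit act)" and g_orbits: "g \<in> orbits X act \<rightarrow> topspace Y"
  shows "continuous_map (orbit_space X act) Y g"
  unfolding continuous_map_def
proof (intro conjI allI impI)
  show "g \<in> topspace (orbit_space X act) \<rightarrow> topspace Y"
    using g_orbits by (simp add: topspace_orbit_space)
  fix V assume V: "openin Y V"
  let ?U = "{C \<in> topspace (orbit_space X act). g C \<in> V}"
  have "\<Union>?U = {x \<in> topspace X. (g \<circ> orbit act) x \<in> V}"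
  proof (intro equalityI subsetI)
    fix x assume "x \<in> \<Union>?U"
    then obtain C where C: "C \<in> orbits X act" "g C \<in> V" "x \<in> C"
      by (auto simp: topspace_orbit_space)
    then have "C = orbit act x" "x \<in> topspace X"
      using orbits_eq_orbit orbits_subset_topspace by blast+
    then show "x \<in> {x \<in> topspace X. (g \<circ> orbit act) x \<in> V}"
      using C(2) by simp
  next
    fix x assume "x \<in> {x \<in> topspace X. (g \<circ> orbit act) x \<in> V}"
    then show "x \<in> \<Union>?U"
      using orbit_in_orbits mem_orbit_self by (auto simp: topspace_orbit_space)
  qed
  then have "openin X (\<Union>?U)"
    using openin_continuous_map_preimage[OF g V] by simp
  then show "openin (orbit_space X act) ?U"
    by (simp add: openin_orbit_space topspace_orbit_space)
qed

lemma act_mem_orbit: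
  "x \<in> topspace X \<Longrightarrow> y \<in> orbit act x \<Longrightarrow> t \<in> U1 \<Longrightarrow> act t y \<in> orbit act x"
  unfolding orbit_def using act_act U1_mult by auto

lemma continuous_map_orbit_subtopology:
  "continuous_map (subtopology X S) (subtopology (orbit_space X act) (orbit act ` S)) (orbit act)"
  by (simp add: continuous_map_in_subtopology continuous_map_from_subtopology[OF continuous_map_orbit]
      topspace_subtopology)

lemma openin_invariant_core:
  assumes "openin X V"
  shows "openin X {y \<in> topspace X. \<forall>t\<in>U1. act t y \<in> V}"
proof -
  let ?P = "prod_topology (top_of_set U1) X"
  define K where "K = {z \<in> topspace ?P. (\<lambda>(t, x). act t x) z \<in> topspace X - V}"
  have "closedin ?P K"
    unfolding K_def using assms
    by (intro closedin_continuous_map_preimage[OF continuous_map_action]) blast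
  then have "closedin X (snd ` K)"
    using closed_map_snd[OF compact_space_U1] unfolding closed_map_def by blast
  moreover have "{y \<in> topspace X. \<forall>t\<in>U1. act t y \<in> V} = topspace X - snd ` K"
    unfolding K_def using act_in_topspace by force
  ultimately show ?thesis by (simp add: openin_diff)
qed

lemma openin_orbit_space_orbits_within:
  assumes "openin X V"
  shows "openin (orbit_space X act) {C \<in> orbits X act. C \<subseteq> V}"
proof -
  have "\<Union>{C \<in> orbits X act. C \<subseteq> V} = {y \<in> topspace X. \<forall>t\<in>U1. act t y \<in> V}"
  proof (intro equalityI subsetI)
    fix y assume "y \<in> \<Union>{C \<in> orbits X act. C \<subseteq> V}"
    then obtain C where "C \<in> orbits X act" "C \<subseteq> V" "y \<in> C" by blast
    then show "y \<in> {y \<in> topspace X. \<forall>t\<in>U1. act t y \<in> V}"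
      using orbits_eq_orbit orbits_subset_topspace unfolding orbit_def by blast
  next
    fix y assume "y \<in> {y \<in> topspace X. \<forall>t\<in>U1. act t y \<in> V}"
    then have "y \<in> orbit act y" "orbit act y \<in> {C \<in> orbits X act. C \<subseteq> V}"
      using mem_orbit_self orbit_in_orbits unfolding orbit_def by auto
    then show "y \<in> \<Union>{C \<in> orbits X act. C \<subseteq> V}" by blast
  qed
  then show ?thesis
    using openin_invariant_core[OF assms] by (simp add: openin_orbit_space)
qed

lemma fixed_points_iff: "x \<in> fixed_points X act \<longleftrightarrow> x \<in> topspace X \<and> (\<forall>t\<in>U1. act t x = x)"
  unfolding fixed_points_def stabilizer_def by blast

lemma fixed_points_iff_orbit:
  "x \<in> topspace X \<Longrightarrow> x \<in> fixed_points X act \<longleftrightarrow> orbit act x = {x}"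
  using mem_orbit_self unfolding fixed_points_iff orbit_def by blast

lemma orbit_fixed_point: "x \<in> fixed_points X act \<Longrightarrow> orbit act x = {x}"
  using fixed_points_iff fixed_points_iff_orbit by blast

lemma free_points_iff:
  "x \<in> free_points X act \<longleftrightarrow> x \<in> topspace X \<and> (\<forall>t\<in>U1. act t x = x \<longrightarrow> t = 1)"
  unfolding free_points_def stabilizer_def using act_one by force

lemma free_point_not_fixed:
  assumes "x \<in> free_points X act"
  shows "x \<notin> fixed_points X act"
proof
  assume "x \<in> fixed_points X act"
  then have "act (-1) x = x"
    unfolding fixed_points_iff by simp
  moreover have "(-1 :: complex) \<in> U1" by simp
  ultimately have "(-1 :: complex) = 1"
    using assms unfolding free_points_iff by blast
  then show False by simp
qed

lemma act_free_point:
  assumes x: "x \<in> free_points X act" and t: "t \<in> U1"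
  shows "act t x \<in> free_points X act"
  unfolding free_points_iff
proof (intro conjI ballI impI)
  have xX: "x \<in> topspace X"
    using x free_points_iff by blast
  then show "act t x \<in> topspace X"
    using t act_in_topspace by blast
  fix u assume u: "u \<in> U1" and fix_u: "act u (act t x) = act t x"
  have "act u x = act (cnj t) (act t (act u x))"
    using act_cnj_act t u xX act_in_topspace by simp
  also have "\<dots> = act (cnj t) (act t x)"
    using act_commute t u xX fix_u by simp
  also have "\<dots> = x"
    using act_cnj_act t xX by simp
  finally have "act u x = x" .
  then show "u = 1"
    using x u free_points_iff by blast
qed

lemma orbit_subset_free_points: "x \<in> free_points X act \<Longrightarrow> orbit act x \<subseteq> free_points X act"
  unfolding orbit_def using act_free_point by blast

lemma free_point_act_inj:
  assumes x: "x \<in> free_points X act" and t: "t \<in> U1" and u: "u \<in> U1"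
    and eq: "act t x = act u x"
  shows "t = u"
proof -
  have xX: "x \<in> topspace X"
    using x free_points_iff by blast
  have "act (cnj u * t) x = act (cnj u) (act t x)"
    using act_act[of "cnj u" t x] t u xX by simp
  also have "\<dots> = act (cnj u) (act u x)"
    using eq by simp
  also have "\<dots> = x"
    using act_cnj_act u xX by simp
  finally have "act (cnj u * t) x = x" .
  then have "cnj u * t = 1"
    using x t u free_points_iff U1_mult[of "cnj u" t] by simp
  then have "u * (cnj u * t) = u" by simp
  then show ?thesis
    using U1_cnj_mult[OF u] by (simp add: mult.assoc[symmetric] mult.commute[of u])
qed

lemma closedin_fixed_points:
  assumes "Hausdorff_space X"
  shows "closedin X (fixed_points X act)"
proof -
  have one: "(1 :: complex) \<in> U1" by simp
  then have "fixed_points X act = (\<Inter>t\<in>U1. {x \<in> topspace X. act t x = x})"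
    unfolding set_eq_iff fixed_points_iff INT_iff mem_Collect_eq by blast
  also have "closedin X \<dots>"
    using closedin_continuous_maps_eq[OF assms continuous_map_act continuous_map_id]
    using one by (intro closedin_INT) auto
  finally show ?thesis .
qed

lemma orbit_filtration_subset_topspace:
  "orbit_filtration X act i \<subseteq> topspace (orbit_space X act)"
  using orbit_in_orbits fixed_points_iff
  by (auto simp: orbit_filtration_def topspace_orbit_space)

end

definition orbit_coord :: "(complex \<Rightarrow> 'a \<Rightarrow> 'a) \<Rightarrow> 'a \<Rightarrow> 'a \<Rightarrow> complex" where
  "orbit_coord act y x = (SOME t. t \<in> U1 \<and> act t y = x)"

context circle_action
begin

lemma orbit_coord:
  assumes "y \<in> free_points X act" and "x \<in> orbit act y"
  shows "orbit_coord act y x \<in> U1" and "act (orbit_coord act y x) y = x"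
proof -
  have "\<exists>t. t \<in> U1 \<and> act t y = x"
    using assms(2) unfolding orbit_def by blast
  then have "(SOME t. t \<in> U1 \<and> act t y = x) \<in> U1 \<and> act (SOME t. t \<in> U1 \<and> act t y = x) y = x"
    by (rule someI_ex)
  then show "orbit_coord act y x \<in> U1" "act (orbit_coord act y x) y = x"
    unfolding orbit_coord_def by simp_all
qed

lemma orbit_coord_eqI:
  assumes "y \<in> free_points X act" and "t \<in> U1" and "act t y = x"
  shows "orbit_coord act y x = t"
proof -
  have "x \<in> orbit act y"
    using assms unfolding orbit_def by blast
  then have "orbit_coord act y x \<in> U1" "act (orbit_coord act y x) y = act t y"
    using orbit_coord assms(1,3) by simp_all
  then show ?thesis
    using free_point_act_inj assms(1,2) by blast
qed

end

locale semifree_circle_action = circle_action +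
  assumes Hausdorff: "Hausdorff_space X"
    and semifree: "\<forall>x\<in>topspace X. stabilizer act x = {1} \<or> stabilizer act x = U1"
begin

lemma fixed_or_free: "x \<in> topspace X \<Longrightarrow> x \<in> fixed_points X act \<or> x \<in> free_points X act"
  using semifree unfolding fixed_points_def free_points_def by blast

lemma free_points_eq: "free_points X act = topspace X - fixed_points X act"
  using fixed_or_free free_point_not_fixed free_points_iff by blast

lemma openin_free_points: "openin X (free_points X act)"
  unfolding free_points_eq using closedin_fixed_points[OF Hausdorff] by (simp add: openin_diff)

lemma free_orbits_eq:
  "orbit act ` free_points X act = orbits X act - orbit act ` fixed_points X act"
proof (intro equalityI subsetI)
  fix C assume "C \<in> orbit act ` free_points X act"
  then obtain x where x: "x \<in> free_points X act" "C = orbit act x" by blast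
  then have xX: "x \<in> topspace X"
    using free_points_iff by blast
  have "orbit act x \<noteq> orbit act y" if "y \<in> fixed_points X act" for y
  proof
    assume "orbit act x = orbit act y"
    then have "x = y"
      using mem_orbit_self[OF xX] orbit_fixed_point[OF that] by simp
    then show False
      using that x(1) free_point_not_fixed by blast
  qed
  then show "C \<in> orbits X act - orbit act ` fixed_points X act"
    using x orbit_in_orbits[OF xX] by blast
next
  fix C assume C: "C \<in> orbits X act - orbit act ` fixed_points X act"
  then obtain x where "x \<in> topspace X" "C = orbit act x"
    unfolding orbits_def by blast
  then show "C \<in> orbit act ` free_points X act"
    using C fixed_or_free by blast
qed

lemma continuous_map_orbit_coord:
  assumes W: "W \<subseteq> free_points X act" and h: "continuous_map (subtopology X W) X h"
    and h_orbit: "\<And>x. x \<in> W \<Longrightarrow> h x \<in> orbit act x"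
  shows "continuous_map (subtopology X W) (top_of_set U1) (\<lambda>x. orbit_coord act (h x) x)"
proof (rule continuous_map_closed_graph_compact[OF compact_space_U1])
  let ?Y = "subtopology X W" and ?\<tau> = "\<lambda>x. orbit_coord act (h x) x"
  have WX: "W \<subseteq> topspace X"
    using W free_points_iff by blast
  then have topY: "topspace ?Y = W"
    by (auto simp: topspace_subtopology)
  have base: "h x \<in> free_points X act" "x \<in> orbit act (h x)" if x: "x \<in> W" for x
    using orbit_subset_free_points mem_orbit_sym h_orbit[OF x] x W WX by blast+
  then show "?\<tau> \<in> topspace ?Y \<rightarrow> topspace (top_of_set U1)"
    using orbit_coord(1) topY by auto
  have "continuous_map (prod_topology ?Y (top_of_set U1)) X (\<lambda>z. act (snd z) (h (fst z)))"
    by (intro continuous_map_act_comp continuous_map_snd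
        continuous_map_compose[OF continuous_map_fst h, unfolded o_def])
  moreover have "continuous_map (prod_topology ?Y (top_of_set U1)) X fst"
    using continuous_map_fst continuous_map_into_fulltopology by blast
  ultimately have "closedin (prod_topology ?Y (top_of_set U1))
      {z \<in> topspace (prod_topology ?Y (top_of_set U1)). act (snd z) (h (fst z)) = fst z}"
    using closedin_continuous_maps_eq[OF Hausdorff] by blast
  moreover have "{z \<in> topspace ?Y \<times> topspace (top_of_set U1). snd z = ?\<tau> (fst z)}
      = {z \<in> topspace (prod_topology ?Y (top_of_set U1)). act (snd z) (h (fst z)) = fst z}"
  proof -
    have "act t (h x) = x \<longleftrightarrow> t = ?\<tau> x" if "x \<in> W" "t \<in> U1" for x t
      using base[OF that(1)] orbit_coord orbit_coord_eqI that(2) by metis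
    then show ?thesis
      using topY by auto
  qed
  ultimately show "closedin (prod_topology ?Y (top_of_set U1))
      {z \<in> topspace ?Y \<times> topspace (top_of_set U1). snd z = ?\<tau> (fst z)}"
    by simp
qed

end

section \<open>Weakly equivariant homeomorphisms descend to orbit spaces\<close>

lemma image_orbit_if_weakly_equivariant:
  assumes "\<psi> ` U1 = U1" and "\<And>t. t \<in> U1 \<Longrightarrow> F (act t x) = act' (\<psi> t) (F x)"
  shows "F ` orbit act x = orbit act' (F x)"
proof -
  have "F ` orbit act x = (\<lambda>t. act' (\<psi> t) (F x)) ` U1"
    unfolding orbit_def image_image using assms(2) by (rule image_cong[OF refl])
  also have "\<dots> = (\<lambda>u. act' u (F x)) ` \<psi> ` U1"
    by (simp add: image_image)
  also have "\<dots> = orbit act' (F x)"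
    unfolding orbit_def assms(1) ..
  finally show ?thesis .
qed

lemma continuous_map_image_orbits:
  assumes "circle_action X act" and "circle_action X' act'"
    and F: "continuous_map X X' F"
    and F_orbit: "\<And>x. x \<in> topspace X \<Longrightarrow> F ` orbit act x = orbit act' (F x)"
  shows "continuous_map (orbit_space X act) (orbit_space X' act') ((`) F)"
proof -
  interpret source: circle_action X act by fact
  interpret target: circle_action X' act' by fact
  have F_X: "F x \<in> topspace X'" if "x \<in> topspace X" for x
    using F that continuous_map_image_subset_topspace by blast
  show ?thesis
  proof (rule source.continuous_map_from_orbit_space)
    have "continuous_map X (orbit_space X' act') (orbit act' \<circ> F)"
      using continuous_map_compose[OF F target.continuous_map_orbit] .
    then show "continuous_map X (orbit_space X' act') ((`) F \<circ> orbit act)"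
      by (rule continuous_map_eq) (simp add: F_orbit)
    show "(`) F \<in> orbits X act \<rightarrow> topspace (orbit_space X' act')"
      using F_orbit F_X target.orbit_in_orbits
      by (auto simp: orbits_def target.topspace_orbit_space)
  qed
qed

lemma image_orbit_inverse:
  assumes "circle_action X act" and FG: "homeomorphic_maps X X' F G"
    and F_orbit: "\<And>x. x \<in> topspace X \<Longrightarrow> F ` orbit act x = orbit act' (F x)"
    and y: "y \<in> topspace X'"
  shows "G ` orbit act' y = orbit act (G y)"
proof -
  interpret circle_action X act by fact
  have Gy: "G y \<in> topspace X" and "F (G y) = y"
    using FG y continuous_map_image_subset_topspace unfolding homeomorphic_maps_def by blast+
  then have "orbit act' y = F ` orbit act (G y)"
    using F_orbit by simp
  then show ?thesis
    using homeomorphic_maps_image_image[OF FG orbit_subset_topspace[OF Gy]] by simp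
qed

lemma homeomorphic_maps_image_orbits:
  assumes source: "circle_action X act" and target: "circle_action X' act'"
    and FG: "homeomorphic_maps X X' F G"
    and F_orbit: "\<And>x. x \<in> topspace X \<Longrightarrow> F ` orbit act x = orbit act' (F x)"
  shows "homeomorphic_maps (orbit_space X act) (orbit_space X' act') ((`) F) ((`) G)"
  unfolding homeomorphic_maps_def
proof (intro conjI ballI)
  interpret source: circle_action X act by fact
  interpret target: circle_action X' act' by fact
  show "continuous_map (orbit_space X act) (orbit_space X' act') ((`) F)"
    using continuous_map_image_orbits[OF source target _ F_orbit] FG
    unfolding homeomorphic_maps_def by blast
  show "continuous_map (orbit_space X' act') (orbit_space X act) ((`) G)"
    using continuous_map_image_orbits[OF target source _ image_orbit_inverse[OF source FG F_orbit]] FG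
    unfolding homeomorphic_maps_def by blast
  show "G ` F ` C = C" if "C \<in> topspace (orbit_space X act)" for C
    using homeomorphic_maps_image_image[OF FG] that source.orbits_subset_topspace
    by (simp add: source.topspace_orbit_space)
  show "F ` G ` D = D" if "D \<in> topspace (orbit_space X' act')" for D
    using homeomorphic_maps_image_image[OF FG[unfolded homeomorphic_maps_sym[of X]]] that
      target.orbits_subset_topspace
    by (simp add: target.topspace_orbit_space)
qed

lemma image_fixed_points_if_orbit_preserving:
  assumes source: "circle_action X act" and target: "circle_action X' act'"
    and FG: "homeomorphic_maps X X' F G"
    and F_orbit: "\<And>x. x \<in> topspace X \<Longrightarrow> F ` orbit act x = orbit act' (F x)"
  shows "F ` fixed_points X act = fixed_points X' act'"
proof (intro equalityI subsetI)
  interpret source: circle_action X act by fact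
  interpret target: circle_action X' act' by fact
  fix y assume "y \<in> F ` fixed_points X act"
  then obtain x where x: "x \<in> fixed_points X act" and y: "y = F x" by blast
  then have xX: "x \<in> topspace X"
    using source.fixed_points_iff by blast
  have "orbit act' (F x) = {F x}"
    using F_orbit[OF xX] source.orbit_fixed_point[OF x] by simp
  then show "y \<in> fixed_points X' act'"
    using target.fixed_points_iff_orbit FG xX y continuous_map_image_subset_topspace
    unfolding homeomorphic_maps_def by blast
next
  interpret source: circle_action X act by fact
  interpret target: circle_action X' act' by fact
  fix y assume y: "y \<in> fixed_points X' act'"
  then have yX: "y \<in> topspace X'"
    using target.fixed_points_iff by blast
  then have Gy: "G y \<in> topspace X" and FGy: "F (G y) = y"
    using FG continuous_map_image_subset_topspace unfolding homeomorphic_maps_def by blast+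
  have "orbit act (G y) = {G y}"
    using image_orbit_inverse[OF source FG F_orbit yX] target.orbit_fixed_point[OF y] by simp
  then have "G y \<in> fixed_points X act"
    using source.fixed_points_iff_orbit Gy by simp
  then show "y \<in> F ` fixed_points X act"
    using FGy by (metis image_eqI)
qed

lemma stratified_homeo_if_weak_equiv_homeo:
  assumes source: "circle_action X act" and target: "circle_action X' act'"
    and "weak_equiv_homeo X act X' act' F"
  shows "stratified_homeo (orbit_space X act) (orbit_filtration X act)
           (orbit_space X' act') (orbit_filtration X' act') ((`) F)"
proof -
  interpret source: circle_action X act by fact
  interpret target: circle_action X' act' by fact
  obtain \<psi> where \<psi>: "torus_aut \<psi>"
    and F_act: "\<forall>t\<in>U1. \<forall>x\<in>topspace X. F (act t x) = act' (\<psi> t) (F x)"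
    using assms(3) unfolding weak_equiv_homeo_def by blast
  obtain G where FG: "homeomorphic_maps X X' F G"
    using assms(3) homeomorphic_map_maps unfolding weak_equiv_homeo_def by blast
  have F_orbit: "F ` orbit act x = orbit act' (F x)" if "x \<in> topspace X" for x
    using image_orbit_if_weakly_equivariant[of \<psi> F act x act'] \<psi> F_act that
    unfolding torus_aut_def bij_betw_def by blast
  have homeo: "homeomorphic_map (orbit_space X act) (orbit_space X' act') ((`) F)"
    using homeomorphic_maps_image_orbits[OF source target FG F_orbit] homeomorphic_maps_imp_map
    by blast
  have "(`) F ` (orbit act ` fixed_points X act) = (\<lambda>x. orbit act' (F x)) ` fixed_points X act"
    unfolding image_image using F_orbit source.fixed_points_iff by (intro image_cong) auto
  also have "\<dots> = orbit act' ` fixed_points X' act'"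
    using image_fixed_points_if_orbit_preserving[OF source target FG F_orbit]
    by (simp add: image_image[symmetric])
  finally have "(`) F ` (orbit act ` fixed_points X act) = orbit act' ` fixed_points X' act'" .
  moreover have "(`) F ` orbits X act = orbits X' act'"
    using homeomorphic_imp_surjective_map[OF homeo]
    by (simp add: source.topspace_orbit_space target.topspace_orbit_space)
  ultimately have "(`) F ` orbit_filtration X act i = orbit_filtration X' act' i" for i
    by (simp add: orbit_filtration_def)
  with homeo show ?thesis
    unfolding stratified_homeo_def by blast
qed

section \<open>Lifting stratified homeomorphisms of orbit spaces\<close>

locale free_part_section = semifree_circle_action +
  fixes s :: "'a set \<Rightarrow> 'a"
  assumes continuous_map_section:
      "continuous_map (subtopology (orbit_space X act) (orbit act ` free_points X act))
         (subtopology X (free_points X act)) s"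
    and section_mem: "C \<in> orbit act ` free_points X act \<Longrightarrow> s C \<in> C"
begin

lemma section_free:
  assumes "C \<in> orbit act ` free_points X act"
  shows "s C \<in> free_points X act"
  using assms section_mem orbit_subset_free_points by blast

lemma section_coord:
  assumes x: "x \<in> free_points X act"
  shows "orbit_coord act (s (orbit act x)) x \<in> U1"
    and "act (orbit_coord act (s (orbit act x)) x) (s (orbit act x)) = x"
proof -
  have xX: "x \<in> topspace X"
    using x free_points_iff by blast
  have orbit_x: "orbit act x \<in> orbit act ` free_points X act"
    using x by blast
  have "orbit act (s (orbit act x)) = orbit act x"
    using orbit_eq_if_mem[OF xX section_mem[OF orbit_x]] .
  then have "x \<in> orbit act (s (orbit act x))"
    using mem_orbit_self[OF xX] by simp
  then show "orbit_coord act (s (orbit act x)) x \<in> U1"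
    and "act (orbit_coord act (s (orbit act x)) x) (s (orbit act x)) = x"
    using orbit_coord section_free[OF orbit_x] by blast+
qed

lemma free_point_eq_act_section:
  assumes "x \<in> free_points X act"
  obtains u where "u \<in> U1" and "x = act u (s (orbit act x))"
  using section_coord[OF assms] by metis

lemma orbit_coord_section_act:
  assumes C: "C \<in> orbit act ` free_points X act" and t: "t \<in> U1"
  shows "act t (s C) \<in> free_points X act"
    and "orbit act (act t (s C)) = C"
    and "orbit_coord act (s C) (act t (s C)) = t"
proof -
  obtain c where c: "c \<in> free_points X act" "C = orbit act c"
    using C by blast
  have sC: "s C \<in> free_points X act"
    using section_free[OF C] .
  then show "act t (s C) \<in> free_points X act"
    using act_free_point t by blast
  have cX: "c \<in> topspace X" and sCX: "s C \<in> topspace X"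
    using c(1) sC free_points_iff by blast+
  have "orbit act (act t (s C)) = orbit act (s C)"
    using orbit_act[OF t sCX] .
  also have "\<dots> = C"
    using orbit_eq_if_mem[OF cX, of "s C"] section_mem[OF C] c(2) by simp
  finally show "orbit act (act t (s C)) = C" .
  show "orbit_coord act (s C) (act t (s C)) = t"
    using orbit_coord_eqI[OF sC t] by simp
qed

lemma continuous_map_section_coord:
  "continuous_map (subtopology X (free_points X act)) (top_of_set U1)
     (\<lambda>x. orbit_coord act (s (orbit act x)) x)"
proof -
  have "continuous_map (subtopology X (free_points X act)) (subtopology X (free_points X act))
      (s \<circ> orbit act)"
    by (rule continuous_map_compose[OF continuous_map_orbit_subtopology continuous_map_section])
  then have h: "continuous_map (subtopology X (free_points X act)) X (\<lambda>x. s (orbit act x))"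
    using continuous_map_into_fulltopology by (simp add: o_def)
  have "s (orbit act x) \<in> orbit act x" if "x \<in> free_points X act" for x
    using section_mem[OF imageI[OF that]] .
  then show ?thesis
    by (rule continuous_map_orbit_coord[OF subset_refl h])
qed

end

text \<open>At a fixed point x, stratum preservation makes f (orbit act x) a singleton, whose element
  the SOME picks.\<close>

definition orbit_lift ::
  "'a topology \<Rightarrow> (complex \<Rightarrow> 'a \<Rightarrow> 'a) \<Rightarrow> ('a set \<Rightarrow> 'a) \<Rightarrow>
   (complex \<Rightarrow> 'b \<Rightarrow> 'b) \<Rightarrow> ('b set \<Rightarrow> 'b) \<Rightarrow> ('a set \<Rightarrow> 'b set) \<Rightarrow> 'a \<Rightarrow> 'b"
  where
  "orbit_lift X act s act' s' f x =
     (if x \<in> free_points X act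
      then act' (orbit_coord act (s (orbit act x)) x) (s' (f (orbit act x)))
      else (SOME y. y \<in> f (orbit act x)))"

locale orbit_space_map =
  source: free_part_section X act s + target: free_part_section X' act' s'
  for X :: "'a topology" and act s and X' :: "'b topology" and act' s' +
  fixes f :: "'a set \<Rightarrow> 'b set"
  assumes continuous_map_orbit_space:
      "continuous_map (orbit_space X act) (orbit_space X' act') f"
    and fixed_orbits: "f ` (orbit act ` fixed_points X act) \<subseteq> orbit act' ` fixed_points X' act'"
    and free_orbits: "f ` (orbit act ` free_points X act) \<subseteq> orbit act' ` free_points X' act'"
begin

abbreviation lift :: "'a \<Rightarrow> 'b" where
  "lift \<equiv> orbit_lift X act s act' s' f"

lemma lift_fixed_point:
  assumes x: "x \<in> fixed_points X act"
  shows "lift x \<in> fixed_points X' act'" and "f (orbit act x) = {lift x}"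
proof -
  have "f (orbit act x) \<in> orbit act' ` fixed_points X' act'"
    using fixed_orbits x by blast
  then obtain y where y: "y \<in> fixed_points X' act'" "f (orbit act x) = {y}"
    using target.orbit_fixed_point by auto
  moreover have "x \<notin> free_points X act"
    using x source.free_point_not_fixed by blast
  ultimately have "lift x = y"
    unfolding orbit_lift_def by simp
  with y show "lift x \<in> fixed_points X' act'" and "f (orbit act x) = {lift x}"
    by simp_all
qed

lemma lift_section_act:
  assumes "C \<in> orbit act ` free_points X act" and "t \<in> U1"
  shows "lift (act t (s C)) = act' t (s' (f C))"
  using source.orbit_coord_section_act[OF assms] unfolding orbit_lift_def by simp

lemma f_orbit_in_orbits:
  assumes "x \<in> topspace X"
  shows "f (orbit act x) \<in> orbits X' act'"
proof -
  have "orbit act x \<in> topspace (orbit_space X act)"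
    using source.orbit_in_orbits[OF assms] by (simp add: source.topspace_orbit_space)
  then show ?thesis
    using continuous_map_image_subset_topspace[OF continuous_map_orbit_space]
    by (auto simp: target.topspace_orbit_space)
qed

lemma lift_mem:
  assumes x: "x \<in> topspace X"
  shows "lift x \<in> f (orbit act x)"
proof (cases "x \<in> free_points X act")
  case True
  then obtain z where z: "z \<in> free_points X' act'" "f (orbit act x) = orbit act' z"
    using free_orbits by blast
  then have "z \<in> topspace X'" "s' (f (orbit act x)) \<in> orbit act' z"
    using target.free_points_iff target.section_mem by blast+
  moreover have "lift x = act' (orbit_coord act (s (orbit act x)) x) (s' (f (orbit act x)))"
    using True by (simp add: orbit_lift_def)
  ultimately show ?thesis
    using z(2) target.act_mem_orbit source.section_coord(1)[OF True] by simp
next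
  case False
  then have "x \<in> fixed_points X act"
    using x source.fixed_or_free by blast
  then show ?thesis
    using lift_fixed_point by simp
qed

lemma lift_in_topspace: "x \<in> topspace X \<Longrightarrow> lift x \<in> topspace X'"
  using lift_mem f_orbit_in_orbits target.orbits_subset_topspace by blast

lemma lift_equivariant:
  assumes x: "x \<in> topspace X" and t: "t \<in> U1"
  shows "lift (act t x) = act' t (lift x)"
proof (cases "x \<in> free_points X act")
  case True
  define C where "C = orbit act x"
  have C: "C \<in> orbit act ` free_points X act"
    using True C_def by blast
  obtain u where u: "u \<in> U1" and x_eq: "x = act u (s C)"
    using source.free_point_eq_act_section[OF True] unfolding C_def .
  have "s C \<in> topspace X"
    using source.section_free[OF C] source.free_points_iff by blast
  then have "lift (act t x) = lift (act (t * u) (s C))"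
    using x_eq source.act_act[OF t u] by simp
  also have "\<dots> = act' (t * u) (s' (f C))"
    using lift_section_act[OF C U1_mult[OF t u]] .
  also have "\<dots> = act' t (act' u (s' (f C)))"
  proof -
    have "s' (f C) \<in> free_points X' act'"
      using target.section_free free_orbits C by blast
    then show ?thesis
      using target.act_act[OF t u] target.free_points_iff by simp
  qed
  also have "act' u (s' (f C)) = lift x"
    using lift_section_act[OF C u] x_eq by simp
  finally show ?thesis .
next
  case False
  then have fixed: "x \<in> fixed_points X act"
    using x source.fixed_or_free by blast
  then have "act t x = x"
    using t source.fixed_points_iff by blast
  moreover have "act' t (lift x) = lift x"
    using lift_fixed_point(1)[OF fixed] t target.fixed_points_iff by blast
  ultimately show ?thesis by simp
qed

lemma continuous_map_lift_free_points:
  "continuous_map (subtopology X (free_points X act)) X' lift"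
proof -
  let ?Y = "subtopology X (free_points X act)"
  have "continuous_map ?Y (orbit_space X' act') (f \<circ> orbit act)"
    by (rule continuous_map_compose[OF source.continuous_map_orbit_subtopology
          continuous_map_from_subtopology[OF continuous_map_orbit_space]])
  moreover have "f \<circ> orbit act \<in> topspace ?Y \<rightarrow> orbit act' ` free_points X' act'"
    using free_orbits by (auto simp: topspace_subtopology)
  ultimately have "continuous_map ?Y
      (subtopology (orbit_space X' act') (orbit act' ` free_points X' act')) (f \<circ> orbit act)"
    by (simp add: continuous_map_in_subtopology)
  then have "continuous_map ?Y X' (s' \<circ> (f \<circ> orbit act))"
    using continuous_map_into_fulltopology[OF continuous_map_compose[OF _ target.continuous_map_section]]
    by blast
  then have "continuous_map ?Y X'
      (\<lambda>x. act' (orbit_coord act (s (orbit act x)) x) ((s' \<circ> (f \<circ> orbit act)) x))"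
    by (rule target.continuous_map_act_comp[OF source.continuous_map_section_coord])
  then show ?thesis
    by (rule continuous_map_eq) (simp add: orbit_lift_def topspace_subtopology)
qed

lemma topcontinuous_at_lift_fixed_point:
  assumes x: "x \<in> fixed_points X act"
  shows "topcontinuous_at X X' lift x"
  unfolding topcontinuous_at_def
proof (intro conjI allI impI)
  show xX: "x \<in> topspace X"
    using x source.fixed_points_iff by blast
  show "lift \<in> topspace X \<rightarrow> topspace X'"
    using lift_in_topspace by blast
  fix V assume V: "openin X' V \<and> lift x \<in> V"
  let ?U = "{C \<in> topspace (orbit_space X act). f C \<in> {D \<in> orbits X' act'. D \<subseteq> V}}"
  have "openin (orbit_space X act) ?U"
    using openin_continuous_map_preimage[OF continuous_map_orbit_space
        target.openin_orbit_space_orbits_within] V by blast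
  then have U: "?U \<subseteq> orbits X act" "openin X (\<Union>?U)"
    by (simp_all add: source.openin_orbit_space)
  have "f (orbit act x) \<in> {D \<in> orbits X' act'. D \<subseteq> V}"
    using lift_fixed_point(2)[OF x] f_orbit_in_orbits[OF xX] V by simp
  then have "orbit act x \<in> ?U"
    using source.orbit_in_orbits[OF xX] by (simp add: source.topspace_orbit_space)
  then have "x \<in> \<Union>?U"
    using source.mem_orbit_self xX by blast
  moreover have "lift z \<in> V" if z: "z \<in> \<Union>?U" for z
  proof -
    obtain C where C: "C \<in> ?U" "z \<in> C"
      using z by blast
    then have "C = orbit act z" "z \<in> topspace X"
      using U(1) source.orbits_eq_orbit source.orbits_subset_topspace by blast+
    then show ?thesis
      using C(1) lift_mem by blast
  qed
  ultimately show "\<exists>U. openin X U \<and> x \<in> U \<and> (\<forall>z\<in>U. lift z \<in> V)"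
    using U(2) by blast
qed

lemma continuous_map_lift: "continuous_map X X' lift"
  unfolding continuous_map_eq_topcontinuous_at
proof
  fix x assume x: "x \<in> topspace X"
  show "topcontinuous_at X X' lift x"
  proof (cases "x \<in> free_points X act")
    case True
    then show ?thesis
      using topcontinuous_at_if_continuous_on_open[OF source.openin_free_points True]
        lift_in_topspace continuous_map_lift_free_points by blast
  next
    case False
    then show ?thesis
      using x source.fixed_or_free topcontinuous_at_lift_fixed_point by blast
  qed
qed

lemma lift_left_inverse:
  assumes "orbit_space_map X' act' s' X act s g"
    and g_f: "\<And>C. C \<in> orbits X act \<Longrightarrow> g (f C) = C"
    and x: "x \<in> topspace X"
  shows "orbit_lift X' act' s' act s g (lift x) = x"
proof -
  interpret inverse: orbit_space_map X' act' s' X act s g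
    by fact
  show ?thesis
  proof (cases "x \<in> free_points X act")
    case True
    define C where "C = orbit act x"
    have C: "C \<in> orbit act ` free_points X act"
      using True C_def by blast
    obtain u where u: "u \<in> U1" and x_eq: "x = act u (s C)"
      using source.free_point_eq_act_section[OF True] unfolding C_def .
    have fC: "f C \<in> orbit act' ` free_points X' act'"
      using free_orbits C by blast
    have "lift x = act' u (s' (f C))"
      using lift_section_act[OF C u] x_eq by simp
    then have "inverse.lift (lift x) = act u (s (g (f C)))"
      using inverse.lift_section_act[OF fC u] by simp
    also have "g (f C) = C"
      using g_f source.orbit_in_orbits[OF x] C_def by blast
    finally show ?thesis
      using x_eq by simp
  next
    case False
    then have fixed: "x \<in> fixed_points X act"
      using x source.fixed_or_free by blast
    have "lift x \<in> topspace X'"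
      using lift_in_topspace[OF x] .
    then have "inverse.lift (lift x) \<in> g (orbit act' (lift x))"
      using inverse.lift_mem by blast
    also have "orbit act' (lift x) = f (orbit act x)"
      using lift_fixed_point[OF fixed] target.orbit_fixed_point by simp
    also have "g (f (orbit act x)) = {x}"
      using g_f source.orbit_in_orbits[OF x] source.orbit_fixed_point[OF fixed] by simp
    finally show ?thesis by simp
  qed
qed

end

lemma stratified_homeo_orbit_strata:
  assumes "semifree_circle_action X act" and "semifree_circle_action X' act'"
    and f: "stratified_homeo (orbit_space X act) (orbit_filtration X act)
              (orbit_space X' act') (orbit_filtration X' act') f"
  shows "f ` (orbit act ` fixed_points X act) = orbit act' ` fixed_points X' act'"
    and "f ` (orbit act ` free_points X act) = orbit act' ` free_points X' act'"
proof -
  interpret source: semifree_circle_action X act by fact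
  interpret target: semifree_circle_action X' act' by fact
  have "f ` orbit_filtration X act 1 = orbit_filtration X' act' 1"
    and "f ` orbit_filtration X act 2 = orbit_filtration X' act' 2"
    using f unfolding stratified_homeo_def by blast+
  then have fixed: "f ` (orbit act ` fixed_points X act) = orbit act' ` fixed_points X' act'"
    and orbits: "f ` orbits X act = orbits X' act'"
    by (simp_all add: orbit_filtration_def)
  then show "f ` (orbit act ` fixed_points X act) = orbit act' ` fixed_points X' act'"
    by blast
  have "homeomorphic_map (orbit_space X act) (orbit_space X' act') f"
    using f unfolding stratified_homeo_def by blast
  then have "inj_on f (orbits X act)"
    using homeomorphic_imp_injective_map by (fastforce simp: source.topspace_orbit_space)
  moreover have "orbit act ` fixed_points X act \<subseteq> orbits X act"
    using source.orbit_in_orbits source.fixed_points_iff by blast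
  ultimately show "f ` (orbit act ` free_points X act) = orbit act' ` free_points X' act'"
    unfolding source.free_orbits_eq target.free_orbits_eq
    by (simp add: inj_on_image_set_diff fixed orbits)
qed

lemma orbit_space_map_if_stratified_homeo:
  assumes source: "free_part_section X act s" and target: "free_part_section X' act' s'"
    and f: "stratified_homeo (orbit_space X act) (orbit_filtration X act)
              (orbit_space X' act') (orbit_filtration X' act') f"
  shows "orbit_space_map X act s X' act' s' f"
proof -
  note strata = stratified_homeo_orbit_strata[OF free_part_section.axioms(1)[OF source]
      free_part_section.axioms(1)[OF target] f]
  have "continuous_map (orbit_space X act) (orbit_space X' act') f"
    using f homeomorphic_imp_continuous_map unfolding stratified_homeo_def by blast
  with strata show ?thesis
    by (intro orbit_space_map.intro[OF source target] orbit_space_map_axioms.intro) auto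
qed

theorem equiv_homeo_if_stratified_homeo:
  assumes source: "free_part_section X act s" and target: "free_part_section X' act' s'"
    and f: "stratified_homeo (orbit_space X act) (orbit_filtration X act)
              (orbit_space X' act') (orbit_filtration X' act') f"
  shows "equiv_homeo X act X' act' (orbit_lift X act s act' s' f)"
proof -
  interpret source: free_part_section X act s by fact
  interpret target: free_part_section X' act' s' by fact
  obtain g where fg: "homeomorphic_maps (orbit_space X act) (orbit_space X' act') f g"
    and g: "stratified_homeo (orbit_space X' act') (orbit_filtration X' act')
              (orbit_space X act) (orbit_filtration X act) g"
    using stratified_homeo_inverse[OF f source.orbit_filtration_subset_topspace] by blast
  have F: "orbit_space_map X act s X' act' s' f"
    using orbit_space_map_if_stratified_homeo[OF source target f] .
  have G: "orbit_space_map X' act' s' X act s g"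
    using orbit_space_map_if_stratified_homeo[OF target source g] .
  interpret F: orbit_space_map X act s X' act' s' f by (rule F)
  interpret G: orbit_space_map X' act' s' X act s g by (rule G)
  have g_f: "\<And>C. C \<in> orbits X act \<Longrightarrow> g (f C) = C"
    and f_g: "\<And>C. C \<in> orbits X' act' \<Longrightarrow> f (g C) = C"
    using fg unfolding homeomorphic_maps_def source.topspace_orbit_space
      target.topspace_orbit_space by blast+
  have "homeomorphic_maps X X' F.lift G.lift"
    unfolding homeomorphic_maps_def
    using F.continuous_map_lift G.continuous_map_lift
      F.lift_left_inverse[OF G g_f] G.lift_left_inverse[OF F f_g] by blast
  then show ?thesis
    unfolding equiv_homeo_def using homeomorphic_maps_imp_map F.lift_equivariant by blast
qed

lemma weak_equiv_homeo_if_equiv_homeo: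
  assumes "equiv_homeo X act X' act' F"
  shows "weak_equiv_homeo X act X' act' F"
proof -
  have "torus_aut (\<lambda>t. t)"
    unfolding torus_aut_def by (simp add: bij_betw_id[unfolded id_def] continuous_on_id)
  with assms show ?thesis
    unfolding equiv_homeo_def weak_equiv_homeo_def by blast
qed

lemma semifree_circle_action_if_locally_standard:
  "locally_standard_T1_over_2stratifold X act \<Longrightarrow> semifree_circle_action X act"
  unfolding locally_standard_T1_over_2stratifold_def
  by (simp add: semifree_circle_action_def semifree_circle_action_axioms_def circle_action_def)

lemma free_part_section_if_chern_class_zero:
  assumes "semifree_circle_action X act" and "chern_class_zero X act"
  obtains s where "free_part_section X act s"
  using assms unfolding chern_class_zero_def
  by (meson free_part_section.intro free_part_section_axioms.intro)

theorem mainTheorem10: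
  fixes X :: "'a topology" and act :: "complex \<Rightarrow> 'a \<Rightarrow> 'a"
    and X' :: "'b topology" and act' :: "complex \<Rightarrow> 'b \<Rightarrow> 'b"
  assumes "locally_standard_T1_over_2stratifold X act"
      and "locally_standard_T1_over_2stratifold X' act'"
      and "chern_class_zero X act"
      and "chern_class_zero X' act'"
  shows "((\<exists>f. stratified_homeo (orbit_space X act) (orbit_filtration X act)
                                 (orbit_space X' act') (orbit_filtration X' act') f)
            \<longleftrightarrow> (\<exists>F. equiv_homeo X act X' act' F))
       \<and> ((\<exists>f. stratified_homeo (orbit_space X act) (orbit_filtration X act)
                                 (orbit_space X' act') (orbit_filtration X' act') f)
            \<longleftrightarrow> (\<exists>F. weak_equiv_homeo X act X' act' F))"
proof -
  have source: "semifree_circle_action X act"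
    using semifree_circle_action_if_locally_standard[OF assms(1)] .
  have target: "semifree_circle_action X' act'"
    using semifree_circle_action_if_locally_standard[OF assms(2)] .
  obtain s where s: "free_part_section X act s"
    using free_part_section_if_chern_class_zero[OF source assms(3)] .
  obtain s' where s': "free_part_section X' act' s'"
    using free_part_section_if_chern_class_zero[OF target assms(4)] .
  note stratified_equiv = equiv_homeo_if_stratified_homeo[OF s s']
  note weak_stratified = stratified_homeo_if_weak_equiv_homeo[OF
      semifree_circle_action.axioms(1)[OF source] semifree_circle_action.axioms(1)[OF target]]
  show ?thesis
    using stratified_equiv weak_equiv_homeo_if_equiv_homeo weak_stratified by blast
qed

end
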